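(* Let $G=(V,E)$ be an $n$-node graph with maximum degree at most $\Delta$ and exact maximum degree $\Delta^*\le\Delta$, and let $S\subseteq V$ be a node set in which every node has degree at least $\delta_S$. For every $\varepsilon>0$ there is a deterministic LOCAL algorithm with round complexity $T_{AM}(\varepsilon)$ that computes a matching of $G$ hitting at least a $(1-\varepsilon)\cdot\frac{\delta_S}{\Delta^*+1}$-fraction of the nodes in $S$.
   Context: LOCAL model: synchronous rounds on the $n$-node network graph, unique $O(\log n)$-bit identifiers, unbounded message size and local computation; each node knows whether it belongs to $S$. A matching hits a node if the node is an endpoint of one of its edges. $T_{AM}(\varepsilon)$ denotes the round complexity of a deterministic LOCAL algorithm that, on any $n$-node graph of maximum degree at most $\Delta$ with positive edge weights whose ratio of maximum to minimum weight is $n^{O(1)}$, computes a matching which is maximal and whose weight is at least $(1-\varepsilon)$ times the weight of a maximum-weight matching. *)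

theory Defs
  imports Main "HOL.Real"
begin

text \<open>Network graphs: nodes are identified with their (unique) identifiers.\<close>
record lgraph =
  verts :: "nat set"
  adj :: "nat \<Rightarrow> nat \<Rightarrow> bool"

definition deg :: "lgraph \<Rightarrow> nat \<Rightarrow> nat" where
  "deg G v = card {u. adj G v u}"

definition maxdeg :: "lgraph \<Rightarrow> nat" where
  "maxdeg G = Max (insert 0 (deg G ` verts G))"

definition wf_graph :: "nat \<Rightarrow> nat \<Rightarrow> nat \<Rightarrow> lgraph \<Rightarrow> bool" where
  "wf_graph n \<Delta> N G \<longleftrightarrow>
     finite (verts G) \<and> card (verts G) = n \<and> verts G \<subseteq> {..<N} \<and>
     (\<forall>u x. adj G u x \<longrightarrow> u \<in> verts G \<and> x \<in> verts G \<and> u \<noteq> x \<and> adj G x u) \<and>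
     (\<forall>v\<in>verts G. deg G v \<le> \<Delta>)"

inductive reach :: "lgraph \<Rightarrow> nat \<Rightarrow> nat \<Rightarrow> nat \<Rightarrow> bool" for G where
  refl: "v \<in> verts G \<Longrightarrow> reach G 0 v v"
| mono: "reach G k v u \<Longrightarrow> reach G (Suc k) v u"
| step: "reach G k v u \<Longrightarrow> adj G u x \<Longrightarrow> x \<in> verts G \<Longrightarrow> reach G (Suc k) v x"

definition ball :: "lgraph \<Rightarrow> nat \<Rightarrow> nat \<Rightarrow> nat set" where
  "ball G T v = {u. reach G T v u}"

definition same_view :: "nat \<Rightarrow> lgraph \<Rightarrow> lgraph \<Rightarrow> nat \<Rightarrow> bool" where
  "same_view T G H v \<longleftrightarrow> ball G T v = ball H T v \<and>
     (\<forall>u\<in>ball G T v. \<forall>x\<in>ball G T v. adj G u x = adj H u x)"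

definition same_wview :: "nat \<Rightarrow> lgraph \<Rightarrow> (nat \<Rightarrow> nat \<Rightarrow> real) \<Rightarrow> lgraph \<Rightarrow> (nat \<Rightarrow> nat \<Rightarrow> real) \<Rightarrow> nat \<Rightarrow> bool" where
  "same_wview T G w H w' v \<longleftrightarrow> same_view T G H v \<and>
     (\<forall>u\<in>ball G T v. \<forall>x\<in>ball G T v. adj G u x \<longrightarrow> w u x = w' u x)"

definition same_sview :: "nat \<Rightarrow> lgraph \<Rightarrow> nat set \<Rightarrow> lgraph \<Rightarrow> nat set \<Rightarrow> nat \<Rightarrow> bool" where
  "same_sview T G S H S' v \<longleftrightarrow> same_view T G H v \<and>
     (\<forall>u\<in>ball G T v. u \<in> S \<longleftrightarrow> u \<in> S')"

definition wf_weights :: "nat \<Rightarrow> nat \<Rightarrow> lgraph \<Rightarrow> (nat \<Rightarrow> nat \<Rightarrow> real) \<Rightarrow> bool" where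
  "wf_weights n c G w \<longleftrightarrow>
     (\<forall>u x. adj G u x \<longrightarrow> w u x > 0 \<and> w u x = w x u) \<and>
     (\<forall>u x y z. adj G u x \<longrightarrow> adj G y z \<longrightarrow> w u x \<le> real n ^ c * w y z)"

definition matching_out :: "lgraph \<Rightarrow> (nat \<Rightarrow> nat option) \<Rightarrow> bool" where
  "matching_out G M \<longleftrightarrow>
     (\<forall>u\<in>verts G. \<forall>x. M u = Some x \<longrightarrow> adj G u x \<and> M x = Some u)"

definition maximal_out :: "lgraph \<Rightarrow> (nat \<Rightarrow> nat option) \<Rightarrow> bool" where
  "maximal_out G M \<longleftrightarrow> (\<forall>u x. adj G u x \<longrightarrow> M u \<noteq> None \<or> M x \<noteq> None)"

text \<open>Weight of a matching (every edge is counted from both endpoints, hence /2).\<close>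
definition mweight :: "lgraph \<Rightarrow> (nat \<Rightarrow> nat \<Rightarrow> real) \<Rightarrow> (nat \<Rightarrow> nat option) \<Rightarrow> real" where
  "mweight G w M = (\<Sum>u\<in>verts G. case M u of None \<Rightarrow> 0 | Some x \<Rightarrow> w u x) / 2"

text \<open>T-round deterministic LOCAL algorithm on weighted graphs (output of v depends
  only on its radius-T view).\<close>
definition local_w_alg :: "nat \<Rightarrow> nat \<Rightarrow> nat \<Rightarrow> nat \<Rightarrow> nat \<Rightarrow>
    (lgraph \<Rightarrow> (nat \<Rightarrow> nat \<Rightarrow> real) \<Rightarrow> nat \<Rightarrow> nat option) \<Rightarrow> bool" where
  "local_w_alg n \<Delta> N c T A \<longleftrightarrow>
     (\<forall>G w H w' v. wf_graph n \<Delta> N G \<and> wf_weights n c G w \<and> wf_graph n \<Delta> N H \<and>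
        wf_weights n c H w' \<and> v \<in> verts G \<and> same_wview T G w H w' v \<longrightarrow> A G w v = A H w' v)"

definition local_s_alg :: "nat \<Rightarrow> nat \<Rightarrow> nat \<Rightarrow> nat \<Rightarrow>
    (lgraph \<Rightarrow> nat set \<Rightarrow> nat \<Rightarrow> nat option) \<Rightarrow> bool" where
  "local_s_alg n \<Delta> N T B \<longleftrightarrow>
     (\<forall>G S H S' v. wf_graph n \<Delta> N G \<and> S \<subseteq> verts G \<and> wf_graph n \<Delta> N H \<and> S' \<subseteq> verts H \<and>
        v \<in> verts G \<and> same_sview T G S H S' v \<longrightarrow> B G S v = B H S' v)"

definition AM_algorithm :: "nat \<Rightarrow> nat \<Rightarrow> nat \<Rightarrow> nat \<Rightarrow> real \<Rightarrow> nat \<Rightarrow>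
    (lgraph \<Rightarrow> (nat \<Rightarrow> nat \<Rightarrow> real) \<Rightarrow> nat \<Rightarrow> nat option) \<Rightarrow> bool" where
  "AM_algorithm n \<Delta> N c \<epsilon> T A \<longleftrightarrow> local_w_alg n \<Delta> N c T A \<and>
     (\<forall>G w. wf_graph n \<Delta> N G \<and> wf_weights n c G w \<longrightarrow>
        matching_out G (A G w) \<and> maximal_out G (A G w) \<and>
        (\<forall>M. matching_out G M \<longrightarrow> mweight G w (A G w) \<ge> (1 - \<epsilon>) * mweight G w M))"

end

theory Submission
  imports Defs "HOL-Combinatorics.Transposition"
begin

text \<open>By Vizing's theorem the edges of \<open>G\<close> can be coloured properly with \<open>\<Delta>\<^sup>* + 1\<close> colours. A node of
  \<open>S\<close> sees at least \<open>\<delta>\<^sub>S\<close> colours, so by averaging some colour class, which is a matching, hits at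
  least \<open>\<delta>\<^sub>S |S| / (\<Delta>\<^sup>* + 1)\<close> nodes of \<open>S\<close>. Weighting every edge by its number of endpoints in \<open>S\<close>
  makes the weight of a matching the number of nodes of \<open>S\<close> it hits, so the approximation algorithm,
  run on the edges incident to \<open>S\<close> with these weights, hits a \<open>(1 - \<epsilon>)\<close>-fraction of that many;
  every node can compute the weights of its view, so the reduction costs no extra rounds.
  Vizing's theorem is proved by the argument of Ehrenfeucht, Faber and Kierstead.\<close>

section \<open>Edge colourings and Kempe chains\<close>

definition finite_graph :: "'a set \<Rightarrow> ('a \<Rightarrow> 'a \<Rightarrow> bool) \<Rightarrow> bool" where
  "finite_graph V E \<longleftrightarrow> finite V \<and> (\<forall>x y. E x y \<longrightarrow> x \<in> V \<and> y \<in> V \<and> x \<noteq> y \<and> E y x)"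

lemma finite_graphD:
  assumes "finite_graph V E"
  shows "finite V" and "E x y \<Longrightarrow> x \<in> V" and "E x y \<Longrightarrow> y \<in> V"
    and "E x y \<Longrightarrow> E y x" and "\<not> E x x"
  using assms unfolding finite_graph_def by blast+

lemma finite_graph_finite_nbrs: "finite_graph V E \<Longrightarrow> finite {y. E x y}"
  by (rule finite_subset[of _ V]) (auto dest: finite_graphD)

definition proper_edge_colouring :: "('a \<Rightarrow> 'a \<Rightarrow> bool) \<Rightarrow> ('a \<Rightarrow> 'a \<Rightarrow> 'c) \<Rightarrow> 'c set \<Rightarrow> bool" where
  "proper_edge_colouring E col K \<longleftrightarrow>
     (\<forall>x y. E x y \<longrightarrow> col x y \<in> K \<and> col x y = col y x) \<and>
     (\<forall>x y z. E x y \<longrightarrow> E x z \<longrightarrow> col x y = col x z \<longrightarrow> y = z)"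

definition colours_at :: "('a \<Rightarrow> 'a \<Rightarrow> bool) \<Rightarrow> ('a \<Rightarrow> 'a \<Rightarrow> 'c) \<Rightarrow> 'a \<Rightarrow> 'c set" where
  "colours_at E col x = col x ` {y. E x y}"

definition missing_colours :: "('a \<Rightarrow> 'a \<Rightarrow> bool) \<Rightarrow> ('a \<Rightarrow> 'a \<Rightarrow> 'c) \<Rightarrow> 'c set \<Rightarrow> 'a \<Rightarrow> 'c set" where
  "missing_colours E col K x = K - colours_at E col x"

definition bicoloured_nbrs :: "('a \<Rightarrow> 'a \<Rightarrow> bool) \<Rightarrow> ('a \<Rightarrow> 'a \<Rightarrow> 'c) \<Rightarrow> 'c \<Rightarrow> 'c \<Rightarrow> 'a \<Rightarrow> 'a set" where
  "bicoloured_nbrs E col i j x = {y. E x y \<and> col x y \<in> {i, j}}"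

lemma proper_edge_colouringD:
  assumes "proper_edge_colouring E col K" and "E x y"
  shows "col x y \<in> K" and "col x y = col y x"
  using assms unfolding proper_edge_colouring_def by blast+

lemma proper_edge_colouring_inj:
  assumes "proper_edge_colouring E col K" and "E x y" and "E x z" and "col x y = col x z"
  shows "y = z"
  using assms unfolding proper_edge_colouring_def by blast

lemma colours_at_subset:
  "proper_edge_colouring E col K \<Longrightarrow> colours_at E col x \<subseteq> K"
  unfolding colours_at_def by (auto dest: proper_edge_colouringD)

lemma card_colours_at:
  assumes "proper_edge_colouring E col K"
  shows "card (colours_at E col x) = card {y. E x y}"
  unfolding colours_at_def
proof (rule card_image, rule inj_onI)
  fix y z assume "y \<in> {y. E x y}" "z \<in> {y. E x y}" "col x y = col x z"
  then show "y = z" using proper_edge_colouring_inj[OF assms] by blast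
qed

lemma bicoloured_nbrs_sym:
  assumes "finite_graph V E" and "proper_edge_colouring E col K"
  shows "y \<in> bicoloured_nbrs E col i j x \<longleftrightarrow> x \<in> bicoloured_nbrs E col i j y"
  using finite_graphD(4)[OF assms(1), of x y] finite_graphD(4)[OF assms(1), of y x]
    proper_edge_colouringD(2)[OF assms(2), of x y] proper_edge_colouringD(2)[OF assms(2), of y x]
  unfolding bicoloured_nbrs_def by auto

lemma bicoloured_nbrs_subset_pair:
  assumes pr: "proper_edge_colouring E col K"
    and p: "p \<in> bicoloured_nbrs E col i j x" and y: "y \<in> bicoloured_nbrs E col i j x" and "p \<noteq> y"
  shows "bicoloured_nbrs E col i j x \<subseteq> {p, y}"
proof
  fix q assume q: "q \<in> bicoloured_nbrs E col i j x"
  have "col x p \<noteq> col x y"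
    using proper_edge_colouring_inj[OF pr] p y \<open>p \<noteq> y\<close> unfolding bicoloured_nbrs_def by blast
  then have "col x q = col x p \<or> col x q = col x y"
    using p y q unfolding bicoloured_nbrs_def by auto
  then show "q \<in> {p, y}"
    using proper_edge_colouring_inj[OF pr] p y q unfolding bicoloured_nbrs_def by blast
qed

lemma bicoloured_nbrs_subset_singleton:
  assumes pr: "proper_edge_colouring E col K" and i: "i \<notin> colours_at E col x"
    and y: "y \<in> bicoloured_nbrs E col i j x"
  shows "bicoloured_nbrs E col i j x \<subseteq> {y}"
proof
  fix q assume q: "q \<in> bicoloured_nbrs E col i j x"
  have "col x y = j" "col x q = j"
    using i y q unfolding bicoloured_nbrs_def colours_at_def by auto
  then show "q \<in> {y}"
    using proper_edge_colouring_inj[OF pr] y q unfolding bicoloured_nbrs_def by simp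
qed

lemma both_colours_at_interior:
  assumes pr: "proper_edge_colouring E col K"
    and p: "p \<in> bicoloured_nbrs E col i j x" and y: "y \<in> bicoloured_nbrs E col i j x" and "p \<noteq> y"
  shows "{i, j} \<subseteq> colours_at E col x"
proof -
  have "col x p \<noteq> col x y"
    using proper_edge_colouring_inj[OF pr] p y \<open>p \<noteq> y\<close> unfolding bicoloured_nbrs_def by blast
  then have "{col x p, col x y} = {i, j}"
    using p y unfolding bicoloured_nbrs_def by auto
  moreover have "{col x p, col x y} \<subseteq> colours_at E col x"
    using p y unfolding bicoloured_nbrs_def colours_at_def by auto
  ultimately show ?thesis by simp
qed

text \<open>\<open>C\<close> is the part of the \<open>{i,j}\<close>-path from \<open>u\<close> found so far and \<open>l\<close> its current end; the path is
  extended at \<open>l\<close> until it cannot be, which happens since \<open>V\<close> is finite.\<close>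
lemma kempe_chain_extend:
  assumes G: "finite_graph V E" and pr: "proper_edge_colouring E col K"
    and ui: "i \<notin> colours_at E col u"
    and "u \<in> C" and "l \<in> C"
    and closed: "\<And>x. x \<in> C \<Longrightarrow> x \<noteq> l \<Longrightarrow> bicoloured_nbrs E col i j x \<subseteq> C"
    and interior: "\<And>x. x \<in> C \<Longrightarrow> x \<noteq> u \<Longrightarrow> x \<noteq> l \<Longrightarrow> {i, j} \<subseteq> colours_at E col x"
    and tail: "l \<noteq> u \<Longrightarrow> \<exists>p\<in>C. p \<noteq> l \<and> p \<in> bicoloured_nbrs E col i j l"
  shows "\<exists>C l. u \<in> C \<and> l \<in> C \<and> (\<forall>x\<in>C. bicoloured_nbrs E col i j x \<subseteq> C) \<and>
           (\<forall>x\<in>C. x \<noteq> u \<longrightarrow> x \<noteq> l \<longrightarrow> {i, j} \<subseteq> colours_at E col x)"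
  using assms(4-)
proof (induction "card (V - C)" arbitrary: C l rule: less_induct)
  case less
  let ?B = "bicoloured_nbrs E col i j"
  show ?case
  proof (cases "?B l \<subseteq> C")
    case True
    then have "\<forall>x\<in>C. ?B x \<subseteq> C" using less.prems(3) by metis
    then show ?thesis using less.prems(1,2,4) by (intro exI[of _ C] exI[of _ l]) simp
  next
    case False
    then obtain y where y: "y \<in> ?B l" and "y \<notin> C" by blast
    have "y \<in> V" using y finite_graphD(3)[OF G] unfolding bicoloured_nbrs_def by blast
    then have smaller: "card (V - insert y C) < card (V - C)"
      using \<open>y \<notin> C\<close> finite_graphD(1)[OF G] by (metis Diff_iff Diff_insert card_Diff1_less finite_Diff)
    have end_nbrs: "?B l \<subseteq> insert y C"
    proof (cases "l = u")
      case True
      show ?thesis using bicoloured_nbrs_subset_singleton[OF pr ui] y True by blast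
    next
      case False
      then obtain p where "p \<in> C" "p \<noteq> l" "p \<in> ?B l" using less.prems(5) by blast
      moreover have "p \<noteq> y" using \<open>p \<in> C\<close> \<open>y \<notin> C\<close> by blast
      ultimately show ?thesis using bicoloured_nbrs_subset_pair[OF pr _ y] by blast
    qed
    have end_interior: "{i, j} \<subseteq> colours_at E col l" if "l \<noteq> u"
    proof -
      obtain p where "p \<in> C" "p \<in> ?B l" using less.prems(5) \<open>l \<noteq> u\<close> by blast
      moreover have "p \<noteq> y" using \<open>p \<in> C\<close> \<open>y \<notin> C\<close> by blast
      ultimately show ?thesis using both_colours_at_interior[OF pr _ y] by blast
    qed
    have "l \<in> ?B y" using y bicoloured_nbrs_sym[OF G pr] by blast
    then have tail: "\<exists>p\<in>insert y C. p \<noteq> y \<and> p \<in> ?B y"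
      using less.prems(2) \<open>y \<notin> C\<close> by (intro bexI[of _ l]) auto
    have closed: "\<And>x. x \<in> insert y C \<Longrightarrow> x \<noteq> y \<Longrightarrow> ?B x \<subseteq> insert y C"
      using less.prems(3) end_nbrs by blast
    have interior: "\<And>x. x \<in> insert y C \<Longrightarrow> x \<noteq> u \<Longrightarrow> x \<noteq> y \<Longrightarrow> {i, j} \<subseteq> colours_at E col x"
      using less.prems(4) end_interior by blast
    show ?thesis
      by (rule less.hyps[of "insert y C" y, OF smaller]) (use less.prems(1) closed interior tail in auto)
  qed
qed

lemma kempe_chain:
  assumes "finite_graph V E" and "proper_edge_colouring E col K"
    and "i \<notin> colours_at E col u"
  shows "\<exists>C l. u \<in> C \<and> l \<in> C \<and> (\<forall>x\<in>C. bicoloured_nbrs E col i j x \<subseteq> C) \<and>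
           (\<forall>x\<in>C. x \<noteq> u \<longrightarrow> x \<noteq> l \<longrightarrow> {i, j} \<subseteq> colours_at E col x)"
  by (rule kempe_chain_extend[OF assms, where C="{u}" and l=u]) auto

lemma transpose_in: "a \<in> K \<Longrightarrow> i \<in> K \<Longrightarrow> j \<in> K \<Longrightarrow> transpose i j a \<in> K"
  by (simp add: transpose_def)

lemma proper_edge_colouring_transpose_on:
  assumes G: "finite_graph V E" and pr: "proper_edge_colouring E col K"
    and "i \<in> K" and "j \<in> K"
    and closed: "\<And>x. x \<in> C \<Longrightarrow> bicoloured_nbrs E col i j x \<subseteq> C"
  shows "proper_edge_colouring E (\<lambda>x y. if x \<in> C then transpose i j (col x y) else col x y) K"
  unfolding proper_edge_colouring_def
proof (intro conjI allI impI)
  fix x y assume xy: "E x y"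
  show "(if x \<in> C then transpose i j (col x y) else col x y) \<in> K"
    using transpose_in[OF proper_edge_colouringD(1)[OF pr xy] \<open>i \<in> K\<close> \<open>j \<in> K\<close>]
      proper_edge_colouringD(1)[OF pr xy] by simp
  have col_sym: "col x y = col y x" using proper_edge_colouringD(2)[OF pr xy] .
  show "(if x \<in> C then transpose i j (col x y) else col x y) =
        (if y \<in> C then transpose i j (col y x) else col y x)"
  proof (cases "col x y \<in> {i, j}")
    case True
    then have "y \<in> bicoloured_nbrs E col i j x" "x \<in> bicoloured_nbrs E col i j y"
      using xy finite_graphD(4)[OF G] col_sym unfolding bicoloured_nbrs_def by auto
    then have "x \<in> C \<longleftrightarrow> y \<in> C" using closed by blast
    then show ?thesis using col_sym by simp
  next
    case False
    then show ?thesis using col_sym by auto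
  qed
next
  fix x y z
  assume "E x y" "E x z"
    and "(if x \<in> C then transpose i j (col x y) else col x y) = (if x \<in> C then transpose i j (col x z) else col x z)"
  then have "col x y = col x z" by (auto split: if_splits dest: transpose_eq_imp_eq)
  then show "y = z" using proper_edge_colouring_inj[OF pr \<open>E x y\<close> \<open>E x z\<close>] by simp
qed

lemma missing_colours_transpose_on:
  fixes C :: "'a set" and col :: "'a \<Rightarrow> 'a \<Rightarrow> 'c"
  assumes "i \<in> K" and "j \<in> K"
  defines "col' \<equiv> \<lambda>x y. if x \<in> C then transpose i j (col x y) else col x y"
  shows "x \<in> C \<Longrightarrow> missing_colours E col' K x = transpose i j ` missing_colours E col K x"
    and "x \<notin> C \<Longrightarrow> missing_colours E col' K x = missing_colours E col K x"
proof -
  assume "x \<in> C"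
  then have "colours_at E col' x = transpose i j ` colours_at E col x"
    unfolding colours_at_def col'_def by (auto simp: image_image)
  moreover have "transpose i j ` K = K" using assms(1,2) by simp
  ultimately show "missing_colours E col' K x = transpose i j ` missing_colours E col K x"
    unfolding missing_colours_def by (simp add: image_set_diff inj_transpose)
next
  assume "x \<notin> C"
  then show "missing_colours E col' K x = missing_colours E col K x"
    unfolding missing_colours_def colours_at_def col'_def by simp
qed

lemma kempe_interchange:
  assumes G: "finite_graph V E" and pr: "proper_edge_colouring E col K"
    and "i \<in> K" and "j \<in> K" and ui: "i \<in> missing_colours E col K u"
  obtains col' z where "proper_edge_colouring E col' K"
    and "missing_colours E col' K u = transpose i j ` missing_colours E col K u"
    and "missing_colours E col' K z = transpose i j ` missing_colours E col K z"
    and "\<And>x. x \<noteq> u \<Longrightarrow> x \<noteq> z \<Longrightarrow> missing_colours E col' K x = missing_colours E col K x"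
proof -
  have ui': "i \<notin> colours_at E col u" using ui unfolding missing_colours_def by simp
  have "\<exists>C l. u \<in> C \<and> l \<in> C \<and> (\<forall>x\<in>C. bicoloured_nbrs E col i j x \<subseteq> C) \<and>
      (\<forall>x\<in>C. x \<noteq> u \<longrightarrow> x \<noteq> l \<longrightarrow> {i, j} \<subseteq> colours_at E col x)"
    by (rule kempe_chain[OF G pr ui'])
  then obtain C l where C: "u \<in> C \<and> l \<in> C \<and> (\<forall>x\<in>C. bicoloured_nbrs E col i j x \<subseteq> C) \<and>
      (\<forall>x\<in>C. x \<noteq> u \<longrightarrow> x \<noteq> l \<longrightarrow> {i, j} \<subseteq> colours_at E col x)"
    by (elim exE)
  then have "u \<in> C" "l \<in> C" and closed: "\<And>x. x \<in> C \<Longrightarrow> bicoloured_nbrs E col i j x \<subseteq> C"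
    and interior: "\<And>x. x \<in> C \<Longrightarrow> x \<noteq> u \<Longrightarrow> x \<noteq> l \<Longrightarrow> {i, j} \<subseteq> colours_at E col x"
    by simp_all
  define col' where "col' = (\<lambda>x y. if x \<in> C then transpose i j (col x y) else col x y)"
  have miss: "missing_colours E col' K x = transpose i j ` missing_colours E col K x" if "x \<in> C" for x
    using missing_colours_transpose_on(1)[OF \<open>i \<in> K\<close> \<open>j \<in> K\<close> that] unfolding col'_def .
  show ?thesis
  proof (rule that[of col' l])
    show "proper_edge_colouring E col' K"
      unfolding col'_def by (rule proper_edge_colouring_transpose_on[OF G pr \<open>i \<in> K\<close> \<open>j \<in> K\<close> closed])
    show "missing_colours E col' K u = transpose i j ` missing_colours E col K u" by (rule miss[OF \<open>u \<in> C\<close>])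
    show "missing_colours E col' K l = transpose i j ` missing_colours E col K l" by (rule miss[OF \<open>l \<in> C\<close>])
  next
    fix x assume "x \<noteq> u" "x \<noteq> l"
    show "missing_colours E col' K x = missing_colours E col K x"
    proof (cases "x \<in> C")
      case True
      then have "i \<notin> missing_colours E col K x" "j \<notin> missing_colours E col K x"
        using interior[OF True \<open>x \<noteq> u\<close> \<open>x \<noteq> l\<close>] unfolding missing_colours_def by auto
      then have "transpose i j ` missing_colours E col K x = missing_colours E col K x"
        by (intro transpose_image_eq) blast
      then show ?thesis using miss[OF True] by (simp only:)
    next
      case False
      then show ?thesis
        unfolding col'_def by (rule missing_colours_transpose_on(2)[OF \<open>i \<in> K\<close> \<open>j \<in> K\<close>])
    qed
  qed
qed

section \<open>Vizing's theorem\<close>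

definition holders :: "'a set \<Rightarrow> ('a \<Rightarrow> 'c set) \<Rightarrow> 'c \<Rightarrow> 'a set" where
  "holders N M c = {u\<in>N. c \<in> M u}"

text \<open>The bookkeeping of the Ehrenfeucht--Faber--Kierstead proof: the neighbours \<open>N\<close> of the vertex to be
  added reserve missing colours, one at \<open>u\<^sub>0\<close> and two at all others.\<close>
definition missing_choice ::
    "('a \<Rightarrow> 'a \<Rightarrow> bool) \<Rightarrow> ('a \<Rightarrow> 'a \<Rightarrow> 'c) \<Rightarrow> 'c set \<Rightarrow> 'a set \<Rightarrow> 'a \<Rightarrow> ('a \<Rightarrow> 'c set) \<Rightarrow> bool" where
  "missing_choice E col K N u0 M \<longleftrightarrow> proper_edge_colouring E col K \<and>
     (\<forall>u\<in>N. M u \<subseteq> missing_colours E col K u) \<and> card (M u0) = 1 \<and> (\<forall>u\<in>N - {u0}. card (M u) = 2)"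

lemma sum_card_holders:
  assumes "finite N" and "finite K" and "\<And>u. u \<in> N \<Longrightarrow> M u \<subseteq> K"
  shows "(\<Sum>c\<in>K. card (holders N M c)) = (\<Sum>u\<in>N. card (M u))"
proof -
  have "(\<Sum>c\<in>K. card (holders N M c)) = (\<Sum>c\<in>K. \<Sum>u\<in>N. of_bool (c \<in> M u))"
    using assms(1) by (simp add: holders_def Int_def)
  also have "\<dots> = (\<Sum>u\<in>N. \<Sum>c\<in>K. of_bool (c \<in> M u))"
    by (rule sum.swap)
  also have "\<dots> = (\<Sum>u\<in>N. card (M u))"
    using assms(2,3) by (intro sum.cong) (auto simp: Int_absorb1 Int_def[symmetric])
  finally show ?thesis .
qed

lemma missing_choice_sum_card_holders:
  assumes mc: "missing_choice E col K N u0 M" and "finite N" and "finite K" and "u0 \<in> N"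
  shows "(\<Sum>c\<in>K. card (holders N M c)) = 2 * card N - 1"
proof -
  have "M u \<subseteq> K" if "u \<in> N" for u
    using mc that unfolding missing_choice_def missing_colours_def by blast
  then have "(\<Sum>c\<in>K. card (holders N M c)) = (\<Sum>u\<in>N. card (M u))"
    by (rule sum_card_holders[OF assms(2,3)])
  also have "\<dots> = card (M u0) + (\<Sum>u\<in>N - {u0}. card (M u))"
    by (rule sum.remove[OF assms(2,4)])
  also have "(\<Sum>u\<in>N - {u0}. card (M u)) = (\<Sum>u\<in>N - {u0}. 2)"
    by (rule sum.cong) (use mc in \<open>simp_all add: missing_choice_def\<close>)
  also have "card (M u0) = 1"
    using mc unfolding missing_choice_def by simp
  also have "1 + (\<Sum>u\<in>N - {u0}. 2) = 2 * card N - 1"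
    using assms(2,4) card_gt_0_iff[of N] by (auto simp: card_Diff_singleton)
  finally show ?thesis .
qed

lemma exists_unheld_colour:
  assumes total: "(\<Sum>c\<in>K. card (holders N M c)) = 2 * card N - 1"
    and "card N \<le> card K" and "finite K" and "finite N"
    and "i \<in> K" and "card (holders N M i) \<ge> 3" and no_single: "\<forall>c\<in>K. card (holders N M c) \<noteq> 1"
  shows "\<exists>j\<in>K. holders N M j = {}"
proof (rule ccontr)
  assume "\<not> ?thesis"
  then have "holders N M c \<noteq> {}" if "c \<in> K" for c
    using that by blast
  moreover have "finite (holders N M c)" for c
    using \<open>finite N\<close> unfolding holders_def by simp
  ultimately have "card (holders N M c) \<noteq> 0" if "c \<in> K" for c
    using that by simp
  then have "2 \<le> card (holders N M c)" if "c \<in> K - {i}" for c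
    using that no_single by (metis DiffD1 One_nat_def Suc_1 less_2_cases_iff not_le)
  then have "2 * card (K - {i}) \<le> (\<Sum>c\<in>K - {i}. card (holders N M c))"
    using sum_bounded_below[of "K - {i}" 2 "\<lambda>c. card (holders N M c)"] by (simp add: mult.commute)
  moreover have "(\<Sum>c\<in>K. card (holders N M c)) = card (holders N M i) + (\<Sum>c\<in>K - {i}. card (holders N M c))"
    by (rule sum.remove[OF \<open>finite K\<close> \<open>i \<in> K\<close>])
  moreover have "card (K - {i}) + 1 = card K"
    using \<open>finite K\<close> \<open>i \<in> K\<close> card_gt_0_iff[of K] by auto
  ultimately show False
    using total \<open>card N \<le> card K\<close> \<open>card (holders N M i) \<ge> 3\<close> by linarith
qed

lemma exchange_subset_transpose_image:
  assumes "A \<subseteq> B" and "j \<notin> A"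
  shows "(if i \<in> A then insert j (A - {i}) else A) \<subseteq> transpose i j ` B"
proof
  fix a assume a: "a \<in> (if i \<in> A then insert j (A - {i}) else A)"
  have "transpose i j a \<in> A"
  proof (cases "a = j")
    case True
    then show ?thesis using a assms(2) by (simp split: if_splits)
  next
    case False
    then have "a \<in> A" "a \<noteq> i" using a assms(2) by (auto split: if_splits)
    then show ?thesis using False by simp
  qed
  then show "a \<in> transpose i j ` B" unfolding in_transpose_image_iff using assms(1) by (rule subsetD[rotated])
qed

lemma missing_choice_exchange:
  fixes M :: "'a \<Rightarrow> 'c set" and W :: "'a set" and i j :: 'c
  defines "M' \<equiv> \<lambda>x. if x \<in> W then insert j (M x - {i}) else M x"
  assumes mc: "missing_choice E col K N u0 M" and "finite K"
    and unheld: "holders N M j = {}" and W: "W \<subseteq> holders N M i"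
    and pr: "proper_edge_colouring E col' K"
    and miss: "\<And>x. x \<in> N \<Longrightarrow> M' x \<subseteq> missing_colours E col' K x"
  shows "missing_choice E col' K N u0 M'"
    and "holders N M' j = W" and "holders N M' i = holders N M i - W"
proof -
  have j_notin: "j \<notin> M x" if "x \<in> N" for x
    using unheld that unfolding holders_def by blast
  have card_eq: "card (M' x) = card (M x)" for x
  proof (cases "x \<in> W")
    case True
    then have "x \<in> N" "i \<in> M x" using W unfolding holders_def by blast+
    have "M x \<subseteq> missing_colours E col K x"
      using mc \<open>x \<in> N\<close> unfolding missing_choice_def by blast
    then have "finite (M x)"
      using \<open>finite K\<close> unfolding missing_colours_def by (metis finite_Diff finite_subset)
    moreover have "card (M x) > 0"
      using \<open>i \<in> M x\<close> \<open>finite (M x)\<close> card_gt_0_iff by blast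
    ultimately show ?thesis
      using True \<open>i \<in> M x\<close> j_notin[OF \<open>x \<in> N\<close>] unfolding M'_def
      by (simp add: card.insert_remove)
  next
    case False
    then show ?thesis unfolding M'_def by simp
  qed
  show "missing_choice E col' K N u0 M'"
    using mc pr miss unfolding missing_choice_def card_eq by blast
  show "holders N M' j = W"
    using W j_notin unfolding holders_def M'_def by auto
  show "holders N M' i = holders N M i - W"
    using W j_notin unfolding holders_def M'_def by auto
qed

lemma card_pair_Int:
  assumes "u \<in> H" and "finite H"
  shows "card ({u, z} \<inter> H) = 1 \<or> card (H - ({u, z} \<inter> H)) + 2 = card H"
proof (cases "z \<noteq> u \<and> z \<in> H")
  case True
  then have "{u, z} \<inter> H = {u, z}" and "card {u, z} = 2" using assms(1) by auto
  then have "card (H - ({u, z} \<inter> H)) = card H - 2" and "2 \<le> card H"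
    using assms card_mono[of H "{u, z}"] True by (simp_all add: card_Diff_subset)
  then show ?thesis by linarith
next
  case False
  then have "{u, z} \<inter> H = {u}" using assms(1) by auto
  then show ?thesis by simp
qed

lemma missing_choice_reduce:
  assumes G: "finite_graph V E" and mc: "missing_choice E col K N u0 M" and "finite K" and "finite N"
    and "i \<in> K" and "j \<in> K" and unheld: "holders N M j = {}" and "u \<in> holders N M i"
  shows "\<exists>col' M'. missing_choice E col' K N u0 M' \<and>
           (card (holders N M' j) = 1 \<or> card (holders N M' i) + 2 = card (holders N M i))"
proof -
  have pr: "proper_edge_colouring E col K" and sub: "\<And>x. x \<in> N \<Longrightarrow> M x \<subseteq> missing_colours E col K x"
    using mc unfolding missing_choice_def by blast+
  have "u \<in> N" "i \<in> M u" using \<open>u \<in> holders N M i\<close> unfolding holders_def by blast+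
  then have "i \<in> missing_colours E col K u" using sub by blast
  then obtain col' z where pr': "proper_edge_colouring E col' K"
    and miss_u: "missing_colours E col' K u = transpose i j ` missing_colours E col K u"
    and miss_z: "missing_colours E col' K z = transpose i j ` missing_colours E col K z"
    and miss_other: "\<And>x. x \<noteq> u \<Longrightarrow> x \<noteq> z \<Longrightarrow> missing_colours E col' K x = missing_colours E col K x"
    by (rule kempe_interchange[OF G pr \<open>i \<in> K\<close> \<open>j \<in> K\<close>]) blast
  define W where "W = {u, z} \<inter> holders N M i"
  have j_notin: "j \<notin> M x" if "x \<in> N" for x
    using unheld that unfolding holders_def by blast
  have miss: "(if x \<in> W then insert j (M x - {i}) else M x) \<subseteq> missing_colours E col' K x"
    if "x \<in> N" for x
  proof (cases "x = u \<or> x = z")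
    case True
    then have "x \<in> W \<longleftrightarrow> i \<in> M x" using \<open>x \<in> N\<close> unfolding W_def holders_def by auto
    then show ?thesis
      using exchange_subset_transpose_image[OF sub[OF that] j_notin[OF that], of i] True miss_u miss_z
      by auto
  next
    case False
    then show ?thesis using miss_other sub[OF that] unfolding W_def by auto
  qed
  have "W \<subseteq> holders N M i" unfolding W_def by blast
  note exchange = missing_choice_exchange[OF mc \<open>finite K\<close> unheld this pr']
  have "missing_choice E col' K N u0 (\<lambda>x. if x \<in> W then insert j (M x - {i}) else M x)"
    by (rule exchange(1)) (rule miss)
  moreover have "holders N (\<lambda>x. if x \<in> W then insert j (M x - {i}) else M x) j = W"
    by (rule exchange(2)) (rule miss)
  moreover have "holders N (\<lambda>x. if x \<in> W then insert j (M x - {i}) else M x) i = holders N M i - W"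
    by (rule exchange(3)) (rule miss)
  moreover have "card W = 1 \<or> card (holders N M i - W) + 2 = card (holders N M i)"
    unfolding W_def using card_pair_Int[OF \<open>u \<in> holders N M i\<close>] \<open>finite N\<close> by (simp add: holders_def)
  ultimately show ?thesis
    by (intro exI[of _ col'] exI[of _ "\<lambda>x. if x \<in> W then insert j (M x - {i}) else M x"]) simp
qed

text \<open>There are \<open>2 |N| - 1\<close> reservations, so some colour is held an odd number of times; Kempe
  interchanges with an unheld colour lower that number by two until some colour is held only once.\<close>
lemma missing_choice_single_holder:
  assumes G: "finite_graph V E" and mc: "missing_choice E col K N u0 M"
    and "finite K" and "finite N" and "u0 \<in> N" and "card N \<le> card K"
  shows "\<exists>col' M' c. missing_choice E col' K N u0 M' \<and> c \<in> K \<and> card (holders N M' c) = 1"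
proof -
  have total: "(\<Sum>c\<in>K. card (holders N M c)) = 2 * card N - 1"
    if "missing_choice E col K N u0 M" for col M
    using missing_choice_sum_card_holders[OF that \<open>finite N\<close> \<open>finite K\<close> \<open>u0 \<in> N\<close>] .
  have "card N > 0" using \<open>finite N\<close> \<open>u0 \<in> N\<close> card_gt_0_iff by blast
  then have "odd (\<Sum>c\<in>K. card (holders N M c))" using total[OF mc] by presburger
  then obtain i where "i \<in> K" "odd (card (holders N M i))"
    using dvd_sum[of K 2 "\<lambda>c. card (holders N M c)"] by blast
  then show ?thesis
    using mc
  proof (induction "card (holders N M i)" arbitrary: col M rule: less_induct)
    case less
    show ?case
    proof (cases "\<exists>c\<in>K. card (holders N M c) = 1")
      case True
      then obtain c where "c \<in> K" "card (holders N M c) = 1" by blast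
      then show ?thesis using less.prems(3) by (intro exI[of _ col] exI[of _ M] exI[of _ c]) simp
    next
      case False
      then have "card (holders N M i) \<noteq> 1" using less.prems(1) by blast
      moreover obtain k where "card (holders N M i) = 2 * k + 1" using less.prems(2) by (rule oddE)
      ultimately have "card (holders N M i) \<ge> 3" by presburger
      then obtain j where "j \<in> K" and unheld: "holders N M j = {}"
        using exists_unheld_colour[OF total[OF less.prems(3)] \<open>card N \<le> card K\<close> \<open>finite K\<close> \<open>finite N\<close>
            less.prems(1)] False by blast
      obtain u where "u \<in> holders N M i"
        using \<open>card (holders N M i) \<ge> 3\<close> by fastforce
      then obtain col' M' where mc': "missing_choice E col' K N u0 M'"
        and "card (holders N M' j) = 1 \<or> card (holders N M' i) + 2 = card (holders N M i)"
        using missing_choice_reduce[OF G less.prems(3) \<open>finite K\<close> \<open>finite N\<close> less.prems(1) \<open>j \<in> K\<close> unheld]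
        by blast
      then consider "card (holders N M' j) = 1" | "card (holders N M' i) + 2 = card (holders N M i)"
        by blast
      then show ?thesis
      proof cases
        case 1
        then show ?thesis using mc' \<open>j \<in> K\<close> by (intro exI[of _ col'] exI[of _ M'] exI[of _ j]) simp
      next
        case 2
        then have "odd (card (holders N M' i))" using less.prems(2) unfolding 2[symmetric] by simp
        moreover have "card (holders N M' i) < card (holders N M i)" using 2 by linarith
        ultimately show ?thesis using less.hyps less.prems(1) mc' by blast
      qed
    qed
  qed
qed

lemma exists_missing_choice:
  assumes pr: "proper_edge_colouring E col K" and "finite K"
    and one: "\<And>u. u \<in> N \<Longrightarrow> 1 \<le> card (missing_colours E col K u)"
    and two: "\<And>u. u \<in> N \<Longrightarrow> u \<noteq> u0 \<Longrightarrow> 2 \<le> card (missing_colours E col K u)"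
    and "u0 \<in> N"
  shows "\<exists>M. missing_choice E col K N u0 M"
proof -
  define need where "need u = (if u = u0 then 1 else 2::nat)" for u
  have "\<exists>A. A \<subseteq> missing_colours E col K u \<and> card A = need u" if "u \<in> N" for u
    using obtain_subset_with_card_n one[OF that] two[OF that] unfolding need_def
    by (metis (full_types))
  then obtain M where "\<And>u. u \<in> N \<Longrightarrow> M u \<subseteq> missing_colours E col K u \<and> card (M u) = need u"
    by metis
  then have "missing_choice E col K N u0 M"
    using pr \<open>u0 \<in> N\<close> unfolding missing_choice_def need_def by auto
  then show ?thesis by blast
qed

lemma proper_edge_colouring_delete_colour:
  "proper_edge_colouring E col K \<Longrightarrow> proper_edge_colouring (\<lambda>x y. E x y \<and> col x y \<noteq> c) col (K - {c})"
  unfolding proper_edge_colouring_def by blast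

lemma missing_colours_delete_colour:
  "missing_colours (\<lambda>x y. E x y \<and> col x y \<noteq> c) col (K - {c}) w = missing_colours E col K w - {c}"
  unfolding missing_colours_def colours_at_def by auto

lemma proper_edge_colouring_union_matching:
  assumes pr: "proper_edge_colouring E' col (K - {c})" and "c \<in> K"
    and E'_sym: "\<And>x y. E' x y \<Longrightarrow> E' y x"
    and matching: "\<And>x y z. E x y \<Longrightarrow> \<not> E' x y \<Longrightarrow> E x z \<Longrightarrow> \<not> E' x z \<Longrightarrow> y = z"
  shows "proper_edge_colouring E (\<lambda>x y. if E' x y then col x y else c) K"
  unfolding proper_edge_colouring_def
proof (intro conjI allI impI)
  fix x y assume "E x y"
  show "(if E' x y then col x y else c) \<in> K"
    using proper_edge_colouringD(1)[OF pr] \<open>c \<in> K\<close> by auto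
  show "(if E' x y then col x y else c) = (if E' y x then col y x else c)"
    using proper_edge_colouringD(2)[OF pr] E'_sym by metis
next
  fix x y z assume "E x y" "E x z"
    and same: "(if E' x y then col x y else c) = (if E' x z then col x z else c)"
  consider "E' x y" "E' x z" | "E' x y \<noteq> E' x z" | "\<not> E' x y" "\<not> E' x z" by blast
  then show "y = z"
  proof cases
    case 1
    then show ?thesis using same proper_edge_colouring_inj[OF pr] by simp
  next
    case 2
    then have False using same proper_edge_colouringD(1)[OF pr] by (auto split: if_splits)
    then show ?thesis ..
  next
    case 3
    then show ?thesis using matching \<open>E x y\<close> \<open>E x z\<close> by blast
  qed
qed

definition delete_vertex :: "('a \<Rightarrow> 'a \<Rightarrow> bool) \<Rightarrow> 'a \<Rightarrow> 'a \<Rightarrow> 'a \<Rightarrow> bool" where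
  "delete_vertex E v x y \<longleftrightarrow> E x y \<and> x \<noteq> v \<and> y \<noteq> v"

lemma finite_graph_delete_vertex: "finite_graph V E \<Longrightarrow> finite_graph V (delete_vertex E v)"
  unfolding finite_graph_def delete_vertex_def by blast

lemma exists_missing_choice_single_holder:
  assumes G: "finite_graph V E" and pr: "proper_edge_colouring E col K" and "finite K" and "finite N"
    and "u0 \<in> N" and "card N \<le> card K"
    and "\<And>u. u \<in> N \<Longrightarrow> 1 \<le> card (missing_colours E col K u)"
    and "\<And>u. u \<in> N \<Longrightarrow> u \<noteq> u0 \<Longrightarrow> 2 \<le> card (missing_colours E col K u)"
  shows "\<exists>col' M' c u. missing_choice E col' K N u0 M' \<and> c \<in> K \<and> holders N M' c = {u}"
proof -
  obtain M where "missing_choice E col K N u0 M"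
    using exists_missing_choice[OF pr \<open>finite K\<close> assms(7,8) \<open>u0 \<in> N\<close>] by blast
  then have "\<exists>col' M' c. missing_choice E col' K N u0 M' \<and> c \<in> K \<and> card (holders N M' c) = 1"
    by (rule missing_choice_single_holder[OF G _ \<open>finite K\<close> \<open>finite N\<close> \<open>u0 \<in> N\<close> \<open>card N \<le> card K\<close>])
  then obtain col' M' c where "missing_choice E col' K N u0 M'" and "c \<in> K" and "card (holders N M' c) = 1"
    by blast
  moreover obtain u where "holders N M' c = {u}"
    using \<open>card (holders N M' c) = 1\<close> by (auto simp: card_1_singleton_iff)
  ultimately show ?thesis by blast
qed

text \<open>The edges left after removing the colour class of \<open>c\<close> away from \<open>v\<close> together with the edge
  \<open>uv\<close>; when \<open>u\<close> misses \<open>c\<close>, the removed edges form a matching and can all be given colour \<open>c\<close>.\<close>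
definition strip_edges :: "('a \<Rightarrow> 'a \<Rightarrow> bool) \<Rightarrow> ('a \<Rightarrow> 'a \<Rightarrow> 'c) \<Rightarrow> 'c \<Rightarrow> 'a \<Rightarrow> 'a \<Rightarrow> 'a \<Rightarrow> 'a \<Rightarrow> bool" where
  "strip_edges E col c u v x y \<longleftrightarrow> E x y \<and> \<not> (delete_vertex E v x y \<and> col x y = c) \<and> {x, y} \<noteq> {u, v}"

lemma finite_graph_strip_edges:
  assumes "finite_graph V E" and "proper_edge_colouring (delete_vertex E v) col K"
  shows "finite_graph V (strip_edges E col c u v)"
  using assms(1) proper_edge_colouringD(2)[OF assms(2)]
  unfolding finite_graph_def strip_edges_def delete_vertex_def by (auto simp: insert_commute)

lemma delete_vertex_strip_edges:
  "delete_vertex (strip_edges E col c u v) v = (\<lambda>x y. delete_vertex E v x y \<and> col x y \<noteq> c)"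
  unfolding strip_edges_def delete_vertex_def by (auto intro!: ext simp: doubleton_eq_iff)

lemma strip_edges_nbrs:
  assumes "finite_graph V E"
  shows "{w. strip_edges E col c u v v w} = {w. E v w} - {u}"
  using finite_graphD(5)[OF assms] unfolding strip_edges_def delete_vertex_def
  by (auto simp: doubleton_eq_iff)

lemma strip_edges_complement_matching:
  assumes G: "finite_graph V E" and pr: "proper_edge_colouring (delete_vertex E v) col K"
    and "E v u" and c_missing: "c \<notin> colours_at (delete_vertex E v) col u"
    and "E x y" "\<not> strip_edges E col c u v x y" and "E x z" "\<not> strip_edges E col c u v x z"
  shows "y = z"
proof -
  have "u \<noteq> v" using \<open>E v u\<close> finite_graphD(5)[OF G] by blast
  have removed: "(delete_vertex E v x w \<and> col x w = c) \<or> {x, w} = {u, v}"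
    if "E x w" "\<not> strip_edges E col c u v x w" for w
    using that unfolding strip_edges_def by blast
  have no_c_at_u: "\<not> (delete_vertex E v u w \<and> col u w = c)" for w
    using c_missing unfolding colours_at_def by blast
  consider "x = u" | "x = v" | "x \<noteq> u" "x \<noteq> v" by blast
  then show ?thesis
  proof cases
    case 1
    then show ?thesis
      using removed[OF assms(5,6)] removed[OF assms(7,8)] no_c_at_u \<open>u \<noteq> v\<close> by (auto simp: doubleton_eq_iff)
  next
    case 2
    then show ?thesis
      using removed[OF assms(5,6)] removed[OF assms(7,8)] \<open>u \<noteq> v\<close>
      by (auto simp: doubleton_eq_iff delete_vertex_def)
  next
    case 3
    then have "delete_vertex E v x y" "col x y = c" "delete_vertex E v x z" "col x z = c"
      using removed[OF assms(5,6)] removed[OF assms(7,8)] by (auto simp: doubleton_eq_iff)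
    then show ?thesis using proper_edge_colouring_inj[OF pr] by metis
  qed
qed

text \<open>Induction on the degree of \<open>v\<close>: a reserved colour \<open>c\<close> held by a single neighbour \<open>u\<close> is used
  for \<open>uv\<close> and its colour class, and the remaining neighbours keep their reserved colours.\<close>
lemma proper_edge_colouring_extend:
  assumes "finite_graph V E"
    and "proper_edge_colouring (delete_vertex E v) col K" and "finite K"
    and "card {u. E v u} \<le> card K"
    and "\<And>u. E v u \<Longrightarrow> 1 \<le> card (missing_colours (delete_vertex E v) col K u)"
    and "\<And>u. E v u \<Longrightarrow> u \<noteq> u0 \<Longrightarrow> 2 \<le> card (missing_colours (delete_vertex E v) col K u)"
  shows "\<exists>col'. proper_edge_colouring E col' K"
  using assms
proof (induction "card {u. E v u}" arbitrary: E col K u0)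
  case 0
  then have "{u. E v u} = {}"
    using finite_graph_finite_nbrs[OF "0.prems"(1)] by (metis card_0_eq)
  then have "delete_vertex E v = E"
    using finite_graphD(4)[OF "0.prems"(1)] unfolding delete_vertex_def by (auto intro!: ext)
  then show ?case using "0.prems"(2) by auto
next
  case (Suc d)
  note G = Suc.prems(1)
  define N where "N = {u. E v u}"
  have "finite N" unfolding N_def by (rule finite_graph_finite_nbrs[OF G])
  have "card N = Suc d" unfolding N_def using Suc.hyps(2) by simp
  then have "N \<noteq> {}" by auto
  define u1 where "u1 = (if u0 \<in> N then u0 else SOME u. u \<in> N)"
  have "u1 \<in> N" unfolding u1_def using \<open>N \<noteq> {}\<close> by (simp add: some_in_eq)
  have "u1 = u0" if "u0 \<in> N" unfolding u1_def using that by simp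
  moreover have "card N \<le> card K" using Suc.prems(4) unfolding N_def .
  ultimately have "\<exists>col' M' c u. missing_choice (delete_vertex E v) col' K N u1 M' \<and> c \<in> K \<and> holders N M' c = {u}"
    using Suc.prems(5,6) \<open>u1 \<in> N\<close> \<open>finite N\<close> unfolding N_def
    by (intro exists_missing_choice_single_holder[OF finite_graph_delete_vertex[OF G] Suc.prems(2,3)]) auto
  then obtain col' M' c u where mc': "missing_choice (delete_vertex E v) col' K N u1 M'" and "c \<in> K"
    and "holders N M' c = {u}"
    by blast
  then have "u \<in> N" and "c \<in> M' u" and c_unheld: "\<And>w. w \<in> N \<Longrightarrow> w \<noteq> u \<Longrightarrow> c \<notin> M' w"
    unfolding holders_def by blast+
  have pr': "proper_edge_colouring (delete_vertex E v) col' K"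
    and M'_missing: "\<And>w. w \<in> N \<Longrightarrow> M' w \<subseteq> missing_colours (delete_vertex E v) col' K w"
    and card_M': "\<And>w. w \<in> N \<Longrightarrow> card (M' w) = (if w = u1 then 1 else 2)"
    using mc' unfolding missing_choice_def by auto
  let ?E' = "strip_edges E col' c u v"
  have G': "finite_graph V ?E'" using finite_graph_strip_edges[OF G pr'] .
  have nbrs': "{w. ?E' v w} = N - {u}" unfolding N_def by (rule strip_edges_nbrs[OF G])
  have missing': "M' w \<subseteq> missing_colours (delete_vertex ?E' v) col' (K - {c}) w" if "?E' v w" for w
    using M'_missing c_unheld nbrs' that
    unfolding delete_vertex_strip_edges missing_colours_delete_colour by blast
  have "card (M' w) \<le> card (missing_colours (delete_vertex ?E' v) col' (K - {c}) w)" if "?E' v w" for w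
    by (rule card_mono[OF _ missing'[OF that]]) (simp add: missing_colours_def \<open>finite K\<close>)
  then have "1 \<le> card (missing_colours (delete_vertex ?E' v) col' (K - {c}) w)"
    and "w \<noteq> u1 \<Longrightarrow> 2 \<le> card (missing_colours (delete_vertex ?E' v) col' (K - {c}) w)"
    if "?E' v w" for w
    using card_M' that nbrs' by (fastforce split: if_splits)+
  moreover have "proper_edge_colouring (delete_vertex ?E' v) col' (K - {c})"
    unfolding delete_vertex_strip_edges using proper_edge_colouring_delete_colour[OF pr'] .
  moreover have "d = card {w. ?E' v w}" "card {w. ?E' v w} \<le> card (K - {c})"
    using nbrs' \<open>card N = Suc d\<close> \<open>u \<in> N\<close> \<open>finite N\<close> \<open>card N \<le> card K\<close> \<open>c \<in> K\<close> \<open>finite K\<close> by simp_all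
  ultimately have "\<exists>col2. proper_edge_colouring ?E' col2 (K - {c})"
    using \<open>finite K\<close> by (intro Suc.hyps(1)[of ?E' col' "K - {c}" u1, OF _ G']) auto
  then obtain col2 where pr2: "proper_edge_colouring ?E' col2 (K - {c})" by blast
  have "c \<notin> colours_at (delete_vertex E v) col' u"
    using M'_missing[OF \<open>u \<in> N\<close>] \<open>c \<in> M' u\<close> unfolding missing_colours_def by blast
  then have "proper_edge_colouring E (\<lambda>x y. if ?E' x y then col2 x y else c) K"
    using strip_edges_complement_matching[OF G pr'] \<open>u \<in> N\<close> finite_graphD(4)[OF G']
    unfolding N_def by (intro proper_edge_colouring_union_matching[OF pr2 \<open>c \<in> K\<close>]) blast+
  then show ?case by blast
qed

lemma card_missing_colours_ge:
  assumes "proper_edge_colouring E col K" and "finite K" and "finite {y. E x y}"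
  shows "card K - card {y. E x y} \<le> card (missing_colours E col K x)"
proof -
  have "finite (colours_at E col x)" unfolding colours_at_def using assms(3) by simp
  then show ?thesis
    using diff_card_le_card_Diff[of "colours_at E col x" K] card_colours_at[OF assms(1), of x]
    unfolding missing_colours_def by simp
qed

theorem vizing:
  assumes "finite_graph V E" and "\<And>x. card {y. E x y} \<le> D"
  shows "\<exists>col. proper_edge_colouring E col {..D}"
proof -
  have "finite V" by (rule finite_graphD(1)[OF assms(1)])
  then show ?thesis using assms
  proof (induction V arbitrary: E rule: finite_induct)
    case empty
    have "\<not> E x y" for x y using finite_graphD(2)[OF empty.prems(1), of x y] by blast
    then have "proper_edge_colouring E (\<lambda>_ _. 0) {..D}"
      unfolding proper_edge_colouring_def by simp
    then show ?case by blast
  next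
    case (insert v F)
    let ?E0 = "delete_vertex E v"
    have G: "finite_graph (insert v F) E" by (rule insert.prems(1))
    have "finite_graph F ?E0"
      using G \<open>finite F\<close> unfolding finite_graph_def delete_vertex_def by blast
    moreover have nbrs_E0: "{y. ?E0 x y} \<subseteq> {y. E x y} - {v}" for x
      unfolding delete_vertex_def by blast
    then have "card {y. ?E0 x y} \<le> D" for x
      using insert.prems(2)[of x] card_mono[OF finite_graph_finite_nbrs[OF G]] by (meson Diff_subset le_trans subset_trans)
    ultimately obtain col where pr: "proper_edge_colouring ?E0 col {..D}"
      using insert.IH by blast
    have "2 \<le> card (missing_colours ?E0 col {..D} u)" if "E v u" for u
    proof -
      have "v \<in> {y. E u y}" using finite_graphD(4)[OF G that] by simp
      then have "card {y. E u y} > 0" using finite_graph_finite_nbrs[OF G] card_gt_0_iff by blast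
      then have "card ({y. E u y} - {v}) < D"
        using \<open>v \<in> {y. E u y}\<close> insert.prems(2)[of u] finite_graph_finite_nbrs[OF G] by simp
      then have "card {y. ?E0 u y} + 2 \<le> card {..D}"
        using card_mono[OF _ nbrs_E0[of u]] finite_graph_finite_nbrs[OF G, of u] by simp
      moreover have "card {..D} - card {y. ?E0 u y} \<le> card (missing_colours ?E0 col {..D} u)"
        by (rule card_missing_colours_ge[OF pr _ finite_graph_finite_nbrs[OF finite_graph_delete_vertex[OF G]]])
          simp
      ultimately show ?thesis by linarith
    qed
    moreover have "card {u. E v u} \<le> card {..D}" using insert.prems(2)[of v] by simp
    ultimately show ?case
      by (intro proper_edge_colouring_extend[OF G pr]) force+
  qed
qed

section \<open>A matching hitting many nodes of \<open>S\<close>\<close>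

definition colour_class :: "('a \<Rightarrow> 'a \<Rightarrow> bool) \<Rightarrow> ('a \<Rightarrow> 'a \<Rightarrow> 'c) \<Rightarrow> 'c \<Rightarrow> 'a \<Rightarrow> 'a option" where
  "colour_class E col c u =
     (if \<exists>x. E u x \<and> col u x = c then Some (THE x. E u x \<and> col u x = c) else None)"

lemma colour_class_eq_Some:
  assumes "proper_edge_colouring E col K"
  shows "colour_class E col c u = Some x \<longleftrightarrow> E u x \<and> col u x = c"
proof -
  have unique: "y = x" if "E u x" "col u x = c" "E u y" "col u y = c" for x y
    using proper_edge_colouring_inj[OF assms] that by metis
  show ?thesis
  proof
    assume "colour_class E col c u = Some x"
    then have "\<exists>x. E u x \<and> col u x = c" and "x = (THE x. E u x \<and> col u x = c)"
      unfolding colour_class_def by (auto split: if_splits)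
    then show "E u x \<and> col u x = c" using unique by (metis (mono_tags, lifting) theI)
  next
    assume "E u x \<and> col u x = c"
    then show "colour_class E col c u = Some x"
      unfolding colour_class_def using unique by (auto intro: the_equality)
  qed
qed

lemma colour_class_symmetric:
  assumes "finite_graph V E" and "proper_edge_colouring E col K"
    and "colour_class E col c u = Some x"
  shows "E u x" and "colour_class E col c x = Some u"
  using assms(3) finite_graphD(4)[OF assms(1)] proper_edge_colouringD(2)[OF assms(2)]
  unfolding colour_class_eq_Some[OF assms(2)] by metis+

lemma colour_class_ne_None:
  "proper_edge_colouring E col K \<Longrightarrow> colour_class E col c u \<noteq> None \<longleftrightarrow> c \<in> colours_at E col u"
  unfolding colours_at_def using colour_class_eq_Some[of E col K c u] by fastforce

text \<open>Averaging over the \<open>D + 1\<close> colour classes of a Vizing colouring.\<close>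
lemma exists_matching_hitting:
  assumes G: "finite_graph V E" and deg: "\<And>x. card {y. E x y} \<le> D"
    and "S \<subseteq> V" and mindeg: "\<And>v. v \<in> S \<Longrightarrow> \<delta> \<le> card {y. E v y}"
  shows "\<exists>M. (\<forall>u x. M u = Some x \<longrightarrow> E u x \<and> M x = Some u) \<and>
             \<delta> * card S \<le> (D + 1) * card {v\<in>S. M v \<noteq> None}"
proof -
  obtain col where pr: "proper_edge_colouring E col {..D}"
    using vizing[OF G deg] by blast
  have "finite S" using \<open>S \<subseteq> V\<close> finite_graphD(1)[OF G] finite_subset by blast
  let ?f = "\<lambda>c. card (holders S (colours_at E col) c)"
  have "Max (?f ` {..D}) \<in> ?f ` {..D}" by (rule Max_in) auto
  then obtain c where max: "Max (?f ` {..D}) = ?f c" and "c \<in> {..D}" by (rule imageE)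
  have "\<delta> * card S \<le> (\<Sum>v\<in>S. card (colours_at E col v))"
    using sum_bounded_below[of S \<delta>] mindeg card_colours_at[OF pr] by (simp add: mult.commute)
  also have "\<dots> = (\<Sum>c\<le>D. ?f c)"
    using sum_card_holders[OF \<open>finite S\<close>, of "{..D}" "colours_at E col"] colours_at_subset[OF pr] by simp
  also have "\<dots> \<le> (D + 1) * ?f c"
  proof -
    have "?f i \<le> ?f c" if "i \<le> D" for i
      using Max_ge[of "?f ` {..D}" "?f i"] max that by simp
    then show ?thesis using sum_bounded_above[of "{..D}" ?f "?f c"] by simp
  qed
  also have "holders S (colours_at E col) c = {v\<in>S. colour_class E col c v \<noteq> None}"
    unfolding holders_def colour_class_ne_None[OF pr] ..
  finally show ?thesis
    using colour_class_symmetric[OF G pr] by blast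
qed

section \<open>From matchings to the LOCAL algorithm\<close>

text \<open>Edges without an endpoint in \<open>S\<close> would get weight 0, which is not a valid input for the
  approximation algorithm, so they are dropped; the remaining edges are weighted by their number of
  endpoints in \<open>S\<close>.\<close>
definition incident_subgraph :: "lgraph \<Rightarrow> nat set \<Rightarrow> lgraph" where
  "incident_subgraph G S = G\<lparr>adj := (\<lambda>u x. adj G u x \<and> (u \<in> S \<or> x \<in> S))\<rparr>"

definition hit_weight :: "nat set \<Rightarrow> nat \<Rightarrow> nat \<Rightarrow> real" where
  "hit_weight S u x = of_bool (u \<in> S) + of_bool (x \<in> S)"

lemma verts_incident_subgraph [simp]: "verts (incident_subgraph G S) = verts G"
  unfolding incident_subgraph_def by simp

lemma adj_incident_subgraph: "adj (incident_subgraph G S) u x \<longleftrightarrow> adj G u x \<and> (u \<in> S \<or> x \<in> S)"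
  unfolding incident_subgraph_def by simp

lemma finite_graph_of_wf_graph: "wf_graph n \<Delta> N G \<Longrightarrow> finite_graph (verts G) (adj G)"
  unfolding wf_graph_def finite_graph_def by blast

lemma deg_incident_subgraph_le:
  assumes "wf_graph n \<Delta> N G"
  shows "deg (incident_subgraph G S) v \<le> deg G v"
  unfolding deg_def adj_incident_subgraph
  by (rule card_mono[OF finite_graph_finite_nbrs[OF finite_graph_of_wf_graph[OF assms]]]) blast

lemma deg_incident_subgraph: "v \<in> S \<Longrightarrow> deg (incident_subgraph G S) v = deg G v"
  unfolding deg_def adj_incident_subgraph by simp

lemma wf_graph_incident_subgraph:
  assumes "wf_graph n \<Delta> N G"
  shows "wf_graph n \<Delta> N (incident_subgraph G S)"
  using assms deg_incident_subgraph_le[OF assms, of S] order_trans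
  unfolding wf_graph_def adj_incident_subgraph verts_incident_subgraph by blast

lemma wf_weights_hit_weight:
  assumes "wf_graph n \<Delta> N G" and "c \<ge> 1"
  shows "wf_weights n c (incident_subgraph G S) (hit_weight S)"
  unfolding wf_weights_def
proof (intro conjI allI impI)
  fix u x assume "adj (incident_subgraph G S) u x"
  then show "hit_weight S u x > 0" and "hit_weight S u x = hit_weight S x u"
    unfolding adj_incident_subgraph hit_weight_def by auto
next
  fix u x y z
  assume "adj (incident_subgraph G S) u x" and "adj (incident_subgraph G S) y z"
  then have "adj G u x" and yz: "y \<in> S \<or> z \<in> S" unfolding adj_incident_subgraph by blast+
  then have "{u, x} \<subseteq> verts G" "u \<noteq> x" using assms(1) unfolding wf_graph_def by blast+
  then have "2 \<le> n" using assms(1) card_mono[of "verts G" "{u, x}"] unfolding wf_graph_def by simp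
  moreover have "real n \<le> real n ^ c"
    using power_increasing[OF \<open>c \<ge> 1\<close>, of "real n"] \<open>2 \<le> n\<close> by simp
  ultimately have "2 \<le> real n ^ c" by linarith
  moreover have "hit_weight S u x \<le> 2" and "1 \<le> hit_weight S y z"
    using yz unfolding hit_weight_def by auto
  moreover have "2 * 1 \<le> real n ^ c * hit_weight S y z"
    using calculation by (intro mult_mono) auto
  ultimately show "hit_weight S u x \<le> real n ^ c * hit_weight S y z" by linarith
qed

text \<open>Each matched node in \<open>S\<close> is counted once from its own side and once from its partner's side.\<close>
lemma mweight_hit_weight:
  assumes "finite (verts G)" and adj_verts: "\<And>u x. adj G u x \<Longrightarrow> x \<in> verts G"
    and M: "matching_out G M" and "S \<subseteq> verts G"
  shows "mweight G (hit_weight S) M = real (card {v\<in>S. M v \<noteq> None})"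
proof -
  define P where "P = {u\<in>verts G. M u \<noteq> None}"
  define p where "p u = the (M u)" for u
  have "finite P" using assms(1) unfolding P_def by simp
  have p_inv: "p u \<in> P \<and> p (p u) = u" if "u \<in> P" for u
  proof -
    have "adj G u (p u) \<and> M (p u) = Some u"
      using M that unfolding P_def p_def matching_out_def by auto
    then show ?thesis using adj_verts unfolding P_def p_def by auto
  qed
  have "(\<Sum>u\<in>verts G. case M u of None \<Rightarrow> 0 | Some x \<Rightarrow> hit_weight S u x) =
        (\<Sum>u\<in>P. of_bool (u \<in> S) + of_bool (p u \<in> S))"
    unfolding P_def p_def hit_weight_def
    by (rule sum.mono_neutral_cong_right) (use assms(1) in \<open>auto split: option.splits\<close>)
  also have "\<dots> = (\<Sum>u\<in>P. of_bool (u \<in> S)) + (\<Sum>u\<in>P. of_bool (p u \<in> S))"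
    by (rule sum.distrib)
  also have "(\<Sum>u\<in>P. of_bool (p u \<in> S)) = (\<Sum>u\<in>P. of_bool (u \<in> S) :: real)"
    by (rule sum.reindex_bij_witness[of _ p p]) (use p_inv in auto)
  also have "(\<Sum>u\<in>P. of_bool (u \<in> S)) = real (card {v\<in>S. M v \<noteq> None})"
    using \<open>finite P\<close> \<open>S \<subseteq> verts G\<close> unfolding P_def by (auto intro!: arg_cong[where f = card])
  finally show ?thesis unfolding mweight_def by simp
qed

lemma reach_verts: "reach G k v u \<Longrightarrow> v \<in> verts G \<and> u \<in> verts G"
  by (induction rule: reach.induct) auto

lemma reach_le: "reach G k v u \<Longrightarrow> k \<le> T \<Longrightarrow> reach G T v u"
proof (induction T)
  case (Suc T)
  then show ?case by (cases "k = Suc T") (auto intro: reach.mono)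
qed simp

lemma reach_incident_subgraph: "reach (incident_subgraph G S) k v u \<Longrightarrow> reach G k v u"
  by (induction rule: reach.induct) (auto intro: reach.intros simp: adj_incident_subgraph)

lemma reach_incident_subgraph_transfer:
  assumes sv: "same_sview T G S H S' v"
  shows "reach (incident_subgraph G S) k w x \<Longrightarrow> w = v \<Longrightarrow> k \<le> T \<Longrightarrow> reach (incident_subgraph H S') k w x"
proof (induction rule: reach.induct)
  case (refl w)
  then have "w \<in> ball G T w" unfolding ball_def using reach.refl reach_le by fastforce
  then have "w \<in> verts H"
    using sv refl(2) reach_verts unfolding same_sview_def same_view_def ball_def by blast
  then show ?case by (simp add: reach.refl)
next
  case (mono k w u)
  then show ?case by (simp add: reach.mono)
next
  case (step k w u x)
  have "reach G k w u" using reach_incident_subgraph step(1) .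
  moreover have "reach G (Suc k) w x"
    using reach.step[OF \<open>reach G k w u\<close>] step(2,3) unfolding adj_incident_subgraph by simp
  ultimately have "u \<in> ball G T v" "x \<in> ball G T v"
    unfolding ball_def using reach_le step(5,6) by auto
  then have "adj G u x = adj H u x" "u \<in> S \<longleftrightarrow> u \<in> S'" "x \<in> S \<longleftrightarrow> x \<in> S'" "x \<in> ball H T v"
    using sv unfolding same_sview_def same_view_def by auto
  then have "adj (incident_subgraph H S') u x" and "x \<in> verts (incident_subgraph H S')"
    using step(2) reach_verts unfolding adj_incident_subgraph ball_def by auto
  moreover have "reach (incident_subgraph H S') k w u" using step(4-6) by simp
  ultimately show ?case by (rule reach.step[rotated])
qed

lemma same_sview_imp_same_wview:
  assumes sv: "same_sview T G S H S' v"
  shows "same_wview T (incident_subgraph G S) (hit_weight S) (incident_subgraph H S') (hit_weight S') v"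
proof -
  have sv': "same_sview T H S' G S v"
    using sv unfolding same_sview_def same_view_def by auto
  have ball_eq: "ball (incident_subgraph G S) T v = ball (incident_subgraph H S') T v"
    using reach_incident_subgraph_transfer[OF sv] reach_incident_subgraph_transfer[OF sv']
    unfolding ball_def by blast
  have in_ball: "u \<in> ball G T v" if "u \<in> ball (incident_subgraph G S) T v" for u
    using that reach_incident_subgraph unfolding ball_def by blast
  have "adj G u x = adj H u x \<and> (u \<in> S \<longleftrightarrow> u \<in> S') \<and> (x \<in> S \<longleftrightarrow> x \<in> S')"
    if "u \<in> ball (incident_subgraph G S) T v" "x \<in> ball (incident_subgraph G S) T v" for u x
    using sv in_ball[OF that(1)] in_ball[OF that(2)] unfolding same_sview_def same_view_def by blast
  then show ?thesis
    unfolding same_wview_def same_view_def adj_incident_subgraph hit_weight_def using ball_eq by simp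
qed

lemma maxdeg_ge: "finite (verts G) \<Longrightarrow> v \<in> verts G \<Longrightarrow> deg G v \<le> maxdeg G"
  unfolding maxdeg_def by (rule Max_ge) auto

lemma exists_matching_hitting_incident_subgraph:
  assumes wf: "wf_graph n \<Delta> N G" and "S \<subseteq> verts G" and mindeg: "\<forall>v\<in>S. \<delta> \<le> deg G v"
  shows "\<exists>M. matching_out (incident_subgraph G S) M \<and>
             real \<delta> * real (card S) \<le> real (maxdeg G + 1) * real (card {v\<in>S. M v \<noteq> None})"
proof -
  let ?H = "incident_subgraph G S"
  have G: "finite_graph (verts G) (adj ?H)"
    using finite_graph_of_wf_graph[OF wf_graph_incident_subgraph[OF wf]] by simp
  have deg_bound: "card {y. adj ?H x y} \<le> maxdeg G" for x
  proof (cases "x \<in> verts G")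
    case True
    then show ?thesis
      using deg_incident_subgraph_le[OF wf] maxdeg_ge[OF finite_graphD(1)[OF G] True]
      unfolding deg_def by (meson le_trans)
  next
    case False
    then have "{y. adj ?H x y} = {}" using finite_graphD(2)[OF G] by blast
    then show ?thesis by simp
  qed
  have mindeg': "\<delta> \<le> card {y. adj ?H v y}" if "v \<in> S" for v
    using mindeg that deg_incident_subgraph[OF that, of G] unfolding deg_def by auto
  obtain M where M: "\<forall>u x. M u = Some x \<longrightarrow> adj ?H u x \<and> M x = Some u"
    and hits: "\<delta> * card S \<le> (maxdeg G + 1) * card {v\<in>S. M v \<noteq> None}"
    using exists_matching_hitting[OF G deg_bound \<open>S \<subseteq> verts G\<close> mindeg'] by blast
  have "matching_out ?H M" using M unfolding matching_out_def by blast
  moreover have "real \<delta> * real (card S) \<le> real (maxdeg G + 1) * real (card {v\<in>S. M v \<noteq> None})"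
    using hits by (metis of_nat_le_iff of_nat_mult)
  ultimately show ?thesis by blast
qed

lemma local_s_alg_incident_subgraph:
  assumes "local_w_alg n \<Delta> N c T A" and "c \<ge> 1"
  shows "local_s_alg n \<Delta> N T (\<lambda>G S. A (incident_subgraph G S) (hit_weight S))"
  unfolding local_s_alg_def
proof (intro allI impI)
  fix G S H S' v
  assume "wf_graph n \<Delta> N G \<and> S \<subseteq> verts G \<and> wf_graph n \<Delta> N H \<and> S' \<subseteq> verts H \<and>
    v \<in> verts G \<and> same_sview T G S H S' v"
  then show "A (incident_subgraph G S) (hit_weight S) v = A (incident_subgraph H S') (hit_weight S') v"
    using assms wf_graph_incident_subgraph wf_weights_hit_weight same_sview_imp_same_wview
    unfolding local_w_alg_def by (metis verts_incident_subgraph)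
qed

lemma AM_algorithm_hits:
  assumes AM: "AM_algorithm n \<Delta> N c \<epsilon> T A" and "c \<ge> 1"
    and wf: "wf_graph n \<Delta> N G" and "S \<subseteq> verts G" and "\<forall>v\<in>S. \<delta> \<le> deg G v"
  defines "B \<equiv> A (incident_subgraph G S) (hit_weight S)"
  shows "matching_out G B"
    and "(1 - \<epsilon>) * (real \<delta> / real (maxdeg G + 1)) * real (card S) \<le> real (card {v\<in>S. B v \<noteq> None})"
proof -
  let ?H = "incident_subgraph G S"
  have wf': "wf_graph n \<Delta> N ?H" by (rule wf_graph_incident_subgraph[OF wf])
  have "matching_out ?H B \<and> maximal_out ?H B \<and>
      (\<forall>M. matching_out ?H M \<longrightarrow> (1 - \<epsilon>) * mweight ?H (hit_weight S) M \<le> mweight ?H (hit_weight S) B)"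
    unfolding B_def
    using AM[unfolded AM_algorithm_def, THEN conjunct2, rule_format,
        OF conjI[OF wf' wf_weights_hit_weight[OF wf \<open>c \<ge> 1\<close>]]] .
  then have B: "matching_out ?H B"
    and approx: "\<And>M. matching_out ?H M \<Longrightarrow> (1 - \<epsilon>) * mweight ?H (hit_weight S) M \<le> mweight ?H (hit_weight S) B"
    by simp_all
  show "matching_out G B"
    using B unfolding matching_out_def adj_incident_subgraph verts_incident_subgraph by blast
  have mweight: "mweight ?H (hit_weight S) M = real (card {v\<in>S. M v \<noteq> None})" if "matching_out ?H M" for M
    using mweight_hit_weight[OF _ _ that] wf' \<open>S \<subseteq> verts G\<close> unfolding wf_graph_def by simp
  obtain M where M: "matching_out ?H M"
    and hits: "real \<delta> * real (card S) \<le> real (maxdeg G + 1) * real (card {v\<in>S. M v \<noteq> None})"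
    using exists_matching_hitting_incident_subgraph[OF wf \<open>S \<subseteq> verts G\<close> assms(5)] by blast
  show "(1 - \<epsilon>) * (real \<delta> / real (maxdeg G + 1)) * real (card S) \<le> real (card {v\<in>S. B v \<noteq> None})"
  proof (cases "\<epsilon> \<le> 1")
    case True
    have "real \<delta> / real (maxdeg G + 1) * real (card S) \<le> real (card {v\<in>S. M v \<noteq> None})"
      using hits by (simp add: field_simps)
    from mult_left_mono[OF this, of "1 - \<epsilon>"] True
    have "(1 - \<epsilon>) * (real \<delta> / real (maxdeg G + 1)) * real (card S) \<le> (1 - \<epsilon>) * mweight ?H (hit_weight S) M"
      using mweight[OF M] by (simp add: mult.assoc)
    also have "\<dots> \<le> real (card {v\<in>S. B v \<noteq> None})"
      using approx[OF M] mweight[OF B] by simp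
    finally show ?thesis .
  next
    case False
    then have "(1 - \<epsilon>) * (real \<delta> / real (maxdeg G + 1)) * real (card S) \<le> 0"
      by (intro mult_nonpos_nonneg) (simp_all add: mult_nonpos_nonneg)
    then show ?thesis by linarith
  qed
qed

theorem lemma2p6:
  fixes n \<Delta> N c T :: nat and \<epsilon> :: real
    and A :: "lgraph \<Rightarrow> (nat \<Rightarrow> nat \<Rightarrow> real) \<Rightarrow> nat \<Rightarrow> nat option"
  assumes "\<epsilon> > 0" and "c \<ge> 1"
    and "AM_algorithm n \<Delta> N c \<epsilon> T A"
  shows "\<exists>B. local_s_alg n \<Delta> N T B \<and>
    (\<forall>G S \<delta>. wf_graph n \<Delta> N G \<and> S \<subseteq> verts G \<and> (\<forall>v\<in>S. deg G v \<ge> \<delta>) \<longrightarrow>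
        matching_out G (B G S) \<and>
        real (card {v\<in>S. B G S v \<noteq> None})
          \<ge> (1 - \<epsilon>) * (real \<delta> / real (maxdeg G + 1)) * real (card S))"
proof (intro exI conjI allI impI)
  show "local_s_alg n \<Delta> N T (\<lambda>G S. A (incident_subgraph G S) (hit_weight S))"
    using local_s_alg_incident_subgraph assms(2,3) unfolding AM_algorithm_def by blast
next
  fix G S \<delta>
  assume "wf_graph n \<Delta> N G \<and> S \<subseteq> verts G \<and> (\<forall>v\<in>S. \<delta> \<le> deg G v)"
  then show "matching_out G (A (incident_subgraph G S) (hit_weight S))"
    and "(1 - \<epsilon>) * (real \<delta> / real (maxdeg G + 1)) * real (card S)
          \<le> real (card {v\<in>S. A (incident_subgraph G S) (hit_weight S) v \<noteq> None})"
    using AM_algorithm_hits[OF assms(3,2)] by blast+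
qed

end
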